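(* Let $G\in\mathcal C^\infty(\bar\Omega,\mathbb R^{3\times3}_{\mathrm{sym,pos}})$, $\bar{\mathcal G}=G(\cdot,0)$, and let $y_0\in\mathcal C^\infty(\bar\omega,\mathbb R^3)$ satisfy $(\nabla y_0)^{\mathsf T}\nabla y_0=\bar{\mathcal G}_{2\times2}$ and $((\nabla y_0)^{\mathsf T}\nabla\vec b_0)_{\mathrm{sym}}=\frac12\partial_3G(x',0)_{2\times2}$ on $\omega$. Then for $i,j=1,2$ and all $x'\in\omega$: $$\big[\partial_{ij}y_0,\ \partial_i\vec b_0,\ \tilde d_0\big](x')=\big[\partial_1y_0,\partial_2y_0,\vec b_0\big](x')\begin{bmatrix}\Gamma^1_{ij}&\Gamma^1_{i3}&\Gamma^1_{33}\\ \Gamma^2_{ij}&\Gamma^2_{i3}&\Gamma^2_{33}\\ \Gamma^3_{ij}&\Gamma^3_{i3}&\Gamma^3_{33}\end{bmatrix}(x',0).$$ Consequently, for every smooth $\vec q:\omega\to\mathbb R^3$, $$\Big[\big\langle\partial_iy_0,\partial_j\big(Q_0^{-\mathsf T}\vec q\big)\big\rangle\Big]_{i,j=1,2}=\big[\partial_jq_i\big]_{i,j=1,2}-\Big[\big\langle\vec q,(\Gamma^1_{ij},\Gamma^2_{ij},\Gamma^3_{ij})(x',0)\big\rangle\Big]_{i,j=1,2}.$$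
   Context: $\omega\subset\mathbb R^2$ open, bounded, connected, Lipschitz; $\Omega=\omega\times(-1/2,1/2)$. $\vec b_0=(\nabla y_0)(\bar{\mathcal G}_{2\times2})^{-1}(\bar{\mathcal G}_{13},\bar{\mathcal G}_{23})^{\mathsf T}+\sqrt{\det\bar{\mathcal G}/\det\bar{\mathcal G}_{2\times2}}\,\frac{\partial_1y_0\times\partial_2y_0}{|\partial_1y_0\times\partial_2y_0|}$; $Q_0=[\partial_1y_0,\partial_2y_0,\vec b_0]$; $\tilde d_0=Q_0^{-\mathsf T}\Big(\partial_3G(x',0)e_3-\frac12\partial_3G(x',0)_{33}e_3-\begin{bmatrix}(\nabla\vec b_0)^{\mathsf T}\vec b_0\\0\end{bmatrix}\Big)$. $\Gamma^i_{kl}=\frac12G^{im}(\partial_lG_{mk}+\partial_kG_{ml}-\partial_mG_{kl})$ are the Christoffel symbols of $G$. $F_{2\times2}$ is the principal minor. *)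

theory Defs
  imports "HOL-Analysis.Analysis" "HOL-Analysis.Cross3"
begin

primrec Ck :: "nat \<Rightarrow> 'a::real_normed_vector set \<Rightarrow> ('a \<Rightarrow> 'b::real_normed_vector) \<Rightarrow> bool" where
  "Ck 0 U f = continuous_on U f"
| "Ck (Suc n) U f = (f differentiable_on U \<and> (\<forall>v. Ck n U (\<lambda>x. frechet_derivative f (at x) v)))"

definition smooth_on :: "'a::real_normed_vector set \<Rightarrow> ('a \<Rightarrow> 'b::real_normed_vector) \<Rightarrow> bool" where
  "smooth_on U f \<longleftrightarrow> (\<forall>n. Ck n U f)"

text \<open>C-infinity up to the boundary: restriction of a smooth map on an open neighbourhood of the closure.\<close>
definition smooth_closure :: "'a::real_normed_vector set \<Rightarrow> ('a \<Rightarrow> 'b::real_normed_vector) \<Rightarrow> bool" where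
  "smooth_closure S f \<longleftrightarrow> (\<exists>U. open U \<and> closure S \<subseteq> U \<and> smooth_on U f)"

definition lipschitz_domain :: "(real^2) set \<Rightarrow> bool" where
  "lipschitz_domain U \<longleftrightarrow> open U \<and>
     (\<forall>p\<in>frontier U. \<exists>r>0. \<exists>R::real^2^2. orthogonal_matrix R \<and>
        (\<exists>(g::real\<Rightarrow>real) L. L-lipschitz_on UNIV g \<and>
           ball p r \<inter> U = {x \<in> ball p r. (R *v (x - p))$2 < g ((R *v (x - p))$1)}))"

definition lift :: "real^2 \<Rightarrow> real \<Rightarrow> real^3" where
  "lift x t = vector [x$1, x$2, t]"

definition Omega :: "(real^2) set \<Rightarrow> (real^3) set" where
  "Omega \<omega> = {lift x t | x t. x \<in> \<omega> \<and> -1/2 < t \<and> t < 1/2}"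

definition ax2 :: "nat \<Rightarrow> real^2" where
  "ax2 i = (if i = 1 then vector [1, 0] else vector [0, 1])"

definition ax3 :: "nat \<Rightarrow> real^3" where
  "ax3 i = (if i = 1 then vector [1, 0, 0] else if i = 2 then vector [0, 1, 0] else vector [0, 0, 1])"

definition pd2 :: "nat \<Rightarrow> (real^2 \<Rightarrow> 'b::real_normed_vector) \<Rightarrow> real^2 \<Rightarrow> 'b" where
  "pd2 i f x = frechet_derivative f (at x) (ax2 i)"

definition pd3 :: "nat \<Rightarrow> (real^3 \<Rightarrow> 'b::real_normed_vector) \<Rightarrow> real^3 \<Rightarrow> 'b" where
  "pd3 i f x = frechet_derivative f (at x) (ax3 i)"

definition ent :: "real^3^3 \<Rightarrow> nat \<Rightarrow> nat \<Rightarrow> real" where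
  "ent M i j = ax3 i \<bullet> (M *v ax3 j)"

definition minor22 :: "real^3^3 \<Rightarrow> real^2^2" where
  "minor22 M = vector [vector [ent M 1 1, ent M 1 2], vector [ent M 2 1, ent M 2 2]]"

definition cols2 :: "real^3 \<Rightarrow> real^3 \<Rightarrow> real^2^3" where
  "cols2 u v = transpose (vector [u, v])"

definition cols3 :: "real^3 \<Rightarrow> real^3 \<Rightarrow> real^3 \<Rightarrow> real^3^3" where
  "cols3 u v w = transpose (vector [u, v, w])"

definition jac2 :: "(real^2 \<Rightarrow> real^3) \<Rightarrow> real^2 \<Rightarrow> real^2^3" where
  "jac2 f x = cols2 (pd2 1 f x) (pd2 2 f x)"

definition symm :: "real^2^2 \<Rightarrow> real^2^2" where
  "symm A = (1/2) *\<^sub>R (A + transpose A)"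

definition christoffel :: "(real^3 \<Rightarrow> real^3^3) \<Rightarrow> real^3 \<Rightarrow> nat \<Rightarrow> nat \<Rightarrow> nat \<Rightarrow> real" where
  "christoffel G x i k l = (1/2) * (\<Sum>m\<in>{1,2,3::nat}. ent (matrix_inv (G x)) i m *
      (ent (pd3 l G x) m k + ent (pd3 k G x) m l - ent (pd3 m G x) k l))"

definition gvec :: "(real^3 \<Rightarrow> real^3^3) \<Rightarrow> real^3 \<Rightarrow> nat \<Rightarrow> nat \<Rightarrow> real^3" where
  "gvec G x k l = vector [christoffel G x 1 k l, christoffel G x 2 k l, christoffel G x 3 k l]"

definition b0 :: "(real^3 \<Rightarrow> real^3^3) \<Rightarrow> (real^2 \<Rightarrow> real^3) \<Rightarrow> real^2 \<Rightarrow> real^3" where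
  "b0 G y0 x = (let Gb = G (lift x 0); c = cross3 (pd2 1 y0 x) (pd2 2 y0 x) in
     jac2 y0 x *v (matrix_inv (minor22 Gb) *v vector [ent Gb 1 3, ent Gb 2 3])
     + sqrt (det Gb / det (minor22 Gb)) *\<^sub>R ((1 / norm c) *\<^sub>R c))"

definition Q0 :: "(real^3 \<Rightarrow> real^3^3) \<Rightarrow> (real^2 \<Rightarrow> real^3) \<Rightarrow> real^2 \<Rightarrow> real^3^3" where
  "Q0 G y0 x = cols3 (pd2 1 y0 x) (pd2 2 y0 x) (b0 G y0 x)"

definition d0 :: "(real^3 \<Rightarrow> real^3^3) \<Rightarrow> (real^2 \<Rightarrow> real^3) \<Rightarrow> real^2 \<Rightarrow> real^3" where
  "d0 G y0 x = (let D = pd3 3 G (lift x 0); b = b0 G y0 x in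
     matrix_inv (transpose (Q0 G y0 x)) *v
       (D *v ax3 3 - (1/2 * ent D 3 3) *\<^sub>R ax3 3
        - vector [pd2 1 (b0 G y0) x \<bullet> b, pd2 2 (b0 G y0) x \<bullet> b, 0]))"

end

theory Submission
  imports Defs
begin

(* Let a_1, a_2, a_3 be the columns \<partial>_1 y0, \<partial>_2 y0, b0 of Q0, and let D k l be the second
   derivatives at t = 0 of y0(x') + t b0(x') + t^2/2 d0(x'), t being the third coordinate: so
   D k l = \<partial>_k a_l for k \<le> 2, D 3 l = \<partial>_l b0 for l \<le> 2 and D 3 3 = d0.  D is symmetric by
   Schwarz's theorem.  By the isometry hypothesis and the construction of b0, the Gram matrix of
   the a_l is G(x',0); differentiating it, and using the hypothesis on \<nabla>b0 and the definition of
   d0 in the t-direction, gives a_m \<bullet> D k l + a_l \<bullet> D k m = \<partial>_k G_ml for all k, l, m.  Koszul's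
   formula turns these into a_m \<bullet> D k l = \<Gamma>_m,kl, i.e. Q0^T (D k l) = G (\<Gamma>^1_kl, \<Gamma>^2_kl, \<Gamma>^3_kl),
   and Q0^T Q0 = G then gives D k l = Q0 (\<Gamma>^1_kl, \<Gamma>^2_kl, \<Gamma>^3_kl).  The second identity follows by
   differentiating a_i \<bullet> Q0^-T q = q_i. *)

section \<open>Symmetry of second derivatives\<close>

definition second_difference :: "('a::real_normed_vector \<Rightarrow> 'b::real_normed_vector) \<Rightarrow> 'a \<Rightarrow> 'a \<Rightarrow> 'a \<Rightarrow> real \<Rightarrow> 'b" where
  "second_difference g x u v h = g (x + h *\<^sub>R u + h *\<^sub>R v) - g (x + h *\<^sub>R u) - g (x + h *\<^sub>R v) + g x"

lemma second_difference_commute: "second_difference g x u v h = second_difference g x v u h"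
  unfolding second_difference_def by (simp add: algebra_simps)

lemma second_difference_mvt:
  fixes g :: "'a::real_normed_vector \<Rightarrow> real"
  assumes dg: "\<And>z. z \<in> ball x r \<Longrightarrow> (g has_derivative Dg z) (at z)"
    and h: "0 < h" "h * (norm u + norm v) < r"
  shows "\<exists>s. 0 < s \<and> s < h \<and>
           second_difference g x u v h = h * (Dg (x + h *\<^sub>R v + s *\<^sub>R u) u - Dg (x + s *\<^sub>R u) u)"
proof -
  define \<phi> where "\<phi> s = g (x + h *\<^sub>R v + s *\<^sub>R u) - g (x + s *\<^sub>R u)" for s
  have in_ball: "x + t *\<^sub>R v + s *\<^sub>R u \<in> ball x r" if "0 \<le> t" "t \<le> h" "0 \<le> s" "s \<le> h" for s t
  proof -
    have "norm (t *\<^sub>R v + s *\<^sub>R u) \<le> t * norm v + s * norm u"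
      using norm_triangle_ineq[of "t *\<^sub>R v" "s *\<^sub>R u"] that by simp
    also have "\<dots> \<le> h * (norm u + norm v)"
      using that mult_right_mono[of t h "norm v"] mult_right_mono[of s h "norm u"] by (simp add: distrib_left)
    finally show ?thesis using h by (simp add: dist_norm add.assoc norm_minus_commute add.commute)
  qed
  have d\<phi>: "(\<phi> has_real_derivative Dg (x + h *\<^sub>R v + s *\<^sub>R u) u - Dg (x + s *\<^sub>R u) u) (at s)"
    if "0 \<le> s" "s \<le> h" for s
  proof -
    have d: "((\<lambda>s. g (x + t *\<^sub>R v + s *\<^sub>R u)) has_derivative (\<lambda>c. Dg (x + t *\<^sub>R v + s *\<^sub>R u) (c *\<^sub>R u))) (at s)"
      if "t = 0 \<or> t = h" for t
      using in_ball[of t s] that \<open>0 \<le> s\<close> \<open>s \<le> h\<close> h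
      by (intro has_derivative_compose[of "\<lambda>s. x + t *\<^sub>R v + s *\<^sub>R u", OF _ dg])
         (auto intro!: derivative_eq_intros)
    have d\<phi>: "(\<phi> has_derivative (\<lambda>c. Dg (x + h *\<^sub>R v + s *\<^sub>R u) (c *\<^sub>R u) - Dg (x + s *\<^sub>R u) (c *\<^sub>R u))) (at s)"
      unfolding \<phi>_def using has_derivative_diff[OF d[of h] d[of 0]] by simp
    have lin: "linear (Dg (x + h *\<^sub>R v + s *\<^sub>R u))" "linear (Dg (x + 0 *\<^sub>R v + s *\<^sub>R u))"
      using dg[THEN has_derivative_linear] in_ball[OF _ _ that, of h] in_ball[OF _ _ that, of 0] h
      by simp_all
    show ?thesis
      unfolding has_field_derivative_def
      by (rule has_derivative_eq_rhs[OF d\<phi>]) (use lin in \<open>auto simp: linear_cmul algebra_simps\<close>)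
  qed
  then obtain s where "0 < s" "s < h" "\<phi> h - \<phi> 0 = (h - 0) * (Dg (x + h *\<^sub>R v + s *\<^sub>R u) u - Dg (x + s *\<^sub>R u) u)"
    using MVT2[of 0 h \<phi>, OF _ d\<phi>] h by auto
  then show ?thesis
    by (intro exI[of _ s]) (simp add: \<phi>_def second_difference_def algebra_simps)
qed

lemma second_difference_estimate:
  fixes g :: "'a::real_normed_vector \<Rightarrow> real"
  assumes dg: "\<And>z. z \<in> ball x r \<Longrightarrow> (g has_derivative Dg z) (at z)" and lin: "linear L"
    and near: "\<And>y. norm (y - x) < d \<Longrightarrow> \<bar>Dg y u - Dg x u - L (y - x)\<bar> \<le> c * norm (y - x)"
    and c: "0 \<le> c" and h: "0 < h" "h * (norm u + norm v + 1) < min r d"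
  shows "\<bar>second_difference g x u v h - h\<^sup>2 * L v\<bar> \<le> 2 * c * h\<^sup>2 * (norm u + norm v + 1)"
proof -
  define K where "K = norm u + norm v + 1"
  have "h * (norm u + norm v) < h * K" using h(1) by (simp add: K_def)
  then have "h * (norm u + norm v) < r" using h(2) by (simp add: K_def)
  then obtain s where s: "0 < s" "s < h"
    and mvt: "second_difference g x u v h = h * (Dg (x + h *\<^sub>R v + s *\<^sub>R u) u - Dg (x + s *\<^sub>R u) u)"
    using second_difference_mvt[of x r g Dg h u v] dg h(1) by blast
  define y1 y2 where "y1 = x + h *\<^sub>R v + s *\<^sub>R u" and "y2 = x + s *\<^sub>R u"
  have su: "s * norm u \<le> h * norm u" using s by (simp add: mult_right_mono)
  have "norm (y1 - x) \<le> h * norm v + s * norm u"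
    using norm_triangle_ineq[of "h *\<^sub>R v" "s *\<^sub>R u"] h s by (simp add: y1_def)
  also have "\<dots> \<le> h * K" using su h(1) by (simp add: K_def distrib_left)
  finally have n1: "norm (y1 - x) \<le> h * K" .
  have "norm (y2 - x) = s * norm u" using s by (simp add: y2_def)
  also have "\<dots> \<le> h * K"
    using su h(1) mult_nonneg_nonneg[OF less_imp_le[OF h(1)] norm_ge_zero[of v]]
    unfolding K_def distrib_left by linarith
  finally have n2: "norm (y2 - x) \<le> h * K" .
  have bound: "\<bar>Dg y u - Dg x u - L (y - x)\<bar> \<le> c * (h * K)" if "norm (y - x) \<le> h * K" for y
    using near[of y] that h(2) mult_left_mono[OF that c] by (simp add: K_def)
  have "L (y1 - x) - L (y2 - x) = h * L v"
    by (simp add: y1_def y2_def linear_add[OF lin] linear_cmul[OF lin])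
  then have eq: "(Dg y1 u - Dg y2 u) - h * L v
      = (Dg y1 u - Dg x u - L (y1 - x)) - (Dg y2 u - Dg x u - L (y2 - x))"
    by linarith
  have est: "\<bar>(Dg y1 u - Dg y2 u) - h * L v\<bar> \<le> c * (h * K) + c * (h * K)"
    unfolding eq by (rule order_trans[OF abs_triangle_ineq4 add_mono[OF bound[OF n1] bound[OF n2]]])
  have "second_difference g x u v h - h\<^sup>2 * L v = h * ((Dg y1 u - Dg y2 u) - h * L v)"
    unfolding mvt[folded y1_def y2_def] by (simp add: power2_eq_square algebra_simps)
  then have "\<bar>second_difference g x u v h - h\<^sup>2 * L v\<bar> = h * \<bar>(Dg y1 u - Dg y2 u) - h * L v\<bar>"
    using h(1) by (simp add: abs_mult)
  also have "\<dots> \<le> h * (c * (h * K) + c * (h * K))"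
    using est h(1) by (simp add: mult_left_mono)
  also have "\<dots> = 2 * c * h\<^sup>2 * K" by (simp add: power2_eq_square algebra_simps)
  finally show ?thesis by (simp add: K_def)
qed

lemma second_difference_tendsto:
  fixes g :: "'a::real_normed_vector \<Rightarrow> real"
  assumes r: "0 < r" and dg: "\<And>z. z \<in> ball x r \<Longrightarrow> (g has_derivative Dg z) (at z)"
    and dL: "((\<lambda>z. Dg z u) has_derivative L) (at x)"
  shows "((\<lambda>h. second_difference g x u v h / h\<^sup>2) \<longlongrightarrow> L v) (at_right 0)"
proof (rule tendstoI)
  fix e :: real assume e: "0 < e"
  define K where "K = norm u + norm v + 1"
  have K: "0 < K" unfolding K_def by (simp add: add_nonneg_pos)
  have "bounded_linear L" and "\<forall>e>0. \<exists>d>0. \<forall>y. norm (y - x) < d \<longrightarrow>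
      norm (Dg y u - Dg x u - L (y - x)) \<le> e * norm (y - x)"
    using dL unfolding has_derivative_at_alt by auto
  moreover have "0 < e / (4 * K)" using e K by simp
  ultimately obtain d where d: "0 < d"
    and near: "\<And>y. norm (y - x) < d \<Longrightarrow> \<bar>Dg y u - Dg x u - L (y - x)\<bar> \<le> e / (4 * K) * norm (y - x)"
    by (auto simp: real_norm_def)
  have lin: "linear L" using \<open>bounded_linear L\<close> bounded_linear.linear by blast
  have "eventually (\<lambda>h. 0 < h \<and> h * K < min r d) (at_right 0)"
    unfolding eventually_at_right_field
    using r d K by (intro exI[of _ "min r d / K"]) (auto simp: pos_less_divide_eq)
  then show "eventually (\<lambda>h. dist (second_difference g x u v h / h\<^sup>2) (L v) < e) (at_right 0)"
  proof (rule eventually_mono, elim conjE)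
    fix h :: real assume h: "0 < h" "h * K < min r d"
    have "\<bar>second_difference g x u v h - h\<^sup>2 * L v\<bar> \<le> 2 * (e / (4 * K)) * h\<^sup>2 * K"
      using second_difference_estimate[OF dg lin near _ h(1)] h(2) e K by (simp add: K_def)
    also have "\<dots> < e * h\<^sup>2" using K e h(1) by simp
    finally have "\<bar>second_difference g x u v h - h\<^sup>2 * L v\<bar> / h\<^sup>2 < e"
      using h(1) by (simp add: pos_divide_less_eq)
    moreover have "second_difference g x u v h / h\<^sup>2 - L v = (second_difference g x u v h - h\<^sup>2 * L v) / h\<^sup>2"
      using h(1) by (simp add: diff_divide_distrib)
    ultimately show "dist (second_difference g x u v h / h\<^sup>2) (L v) < e"
      using h(1) by (simp add: dist_real_def abs_divide)
  qed
qed

text \<open>Both mixed derivatives are limits of the same symmetric second difference.\<close>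
lemma has_derivative_second_commute:
  fixes g :: "'a::real_normed_vector \<Rightarrow> real"
  assumes "0 < r" and "\<And>z. z \<in> ball x r \<Longrightarrow> (g has_derivative Dg z) (at z)"
    and "((\<lambda>z. Dg z u) has_derivative L1) (at x)" and "((\<lambda>z. Dg z v) has_derivative L2) (at x)"
  shows "L1 v = L2 u"
  using second_difference_tendsto[OF assms(1,2,3), of v] second_difference_tendsto[OF assms(1,2,4), of u]
  by (simp add: second_difference_commute[of g x v u] tendsto_unique[OF trivial_limit_at_right_real])

lemma frechet_derivative_second_commute:
  fixes f :: "'a::real_normed_vector \<Rightarrow> real^'n"
  assumes r: "0 < r" and df: "\<And>z. z \<in> ball x r \<Longrightarrow> f differentiable (at z)"
    and du: "(\<lambda>z. frechet_derivative f (at z) u) differentiable (at x)"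
    and dv: "(\<lambda>z. frechet_derivative f (at z) v) differentiable (at x)"
  shows "frechet_derivative (\<lambda>z. frechet_derivative f (at z) u) (at x) v
       = frechet_derivative (\<lambda>z. frechet_derivative f (at z) v) (at x) u"
proof -
  have nth: "((\<lambda>z. h z $ k) has_derivative (\<lambda>w. frechet_derivative h (at z) w $ k)) (at z)"
    if "h differentiable (at z)" for h :: "'a \<Rightarrow> real^'n" and z k
    using bounded_linear.has_derivative[OF bounded_linear_vec_nth that[unfolded frechet_derivative_works]] .
  show ?thesis
    unfolding vec_eq_iff
    using has_derivative_second_commute[OF r nth[OF df] nth[OF du] nth[OF dv]] by blast
qed

lemma frechet_derivative_cong_open:
  assumes "open S" "x \<in> S" "\<And>z. z \<in> S \<Longrightarrow> f z = g z"
  shows "frechet_derivative f (at x) = frechet_derivative g (at x)"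
proof -
  have "(f has_derivative D) (at x) \<longleftrightarrow> (g has_derivative D) (at x)" for D
    using has_derivative_transform_within_open[OF _ assms(1,2)] assms(3) by metis
  then show ?thesis unfolding frechet_derivative_def by simp
qed

lemma differentiable_cong_open:
  assumes "open S" "x \<in> S" "\<And>z. z \<in> S \<Longrightarrow> f z = g z" "g differentiable (at x)"
  shows "f differentiable (at x)"
  using assms has_derivative_transform_within_open[OF _ assms(1,2)]
  unfolding differentiable_def by metis

lemma pd2_cong_open:
  assumes "open S" "x \<in> S" "\<And>z. z \<in> S \<Longrightarrow> f z = g z"
  shows "pd2 j f x = pd2 j g x"
  unfolding pd2_def using frechet_derivative_cong_open[OF assms] by simp

lemma pd2_inner:
  assumes "f differentiable (at x)" "g differentiable (at x)"
  shows "pd2 j (\<lambda>z. f z \<bullet> g z) x = pd2 j f x \<bullet> g x + f x \<bullet> pd2 j g x"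
proof -
  have "frechet_derivative (\<lambda>z. f z \<bullet> g z) (at x)
      = (\<lambda>h. f x \<bullet> frechet_derivative g (at x) h + frechet_derivative f (at x) h \<bullet> g x)"
    using has_derivative_inner[OF assms[unfolded frechet_derivative_works]]
    by (rule frechet_derivative_at[symmetric])
  then show ?thesis unfolding pd2_def by simp
qed

lemma pd2_inner_const:
  assumes "f differentiable (at x)"
  shows "pd2 j (\<lambda>z. c \<bullet> f z) x = c \<bullet> pd2 j f x"
proof -
  have "frechet_derivative (\<lambda>z. c \<bullet> f z) (at x) = (\<lambda>h. c \<bullet> frechet_derivative f (at x) h)"
    using bounded_linear.has_derivative[OF bounded_linear_inner_right assms[unfolded frechet_derivative_works]]
    by (rule frechet_derivative_at[symmetric])
  then show ?thesis unfolding pd2_def by simp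
qed

lemma smooth_on_differentiable: "smooth_on U f \<Longrightarrow> open U \<Longrightarrow> z \<in> U \<Longrightarrow> f differentiable (at z)"
  unfolding smooth_on_def using Ck.simps(2)[of 0 U f] differentiable_on_eq_differentiable_at by blast

lemma smooth_on_pd2: "smooth_on U f \<Longrightarrow> smooth_on U (pd2 j f)"
  unfolding smooth_on_def pd2_def[abs_def] using Ck.simps(2) by blast

lemma differentiable_vec_nth [derivative_intros]:
  "f differentiable F \<Longrightarrow> (\<lambda>x. f x $ k) differentiable F"
  unfolding differentiable_def using bounded_linear.has_derivative[OF bounded_linear_vec_nth] by blast

lemma differentiable_cross3 [derivative_intros]:
  "f differentiable (at x within S) \<Longrightarrow> g differentiable (at x within S)
   \<Longrightarrow> (\<lambda>x. cross3 (f x) (g x)) differentiable (at x within S)"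
  unfolding differentiable_def
  using bounded_bilinear.FDERIV[OF bilinear_cross[THEN bilinear_conv_bounded_bilinear[THEN iffD1]]]
  by blast

lemma differentiable_real_sqrt:
  "f differentiable (at x) \<Longrightarrow> 0 < f x \<Longrightarrow> (\<lambda>z. sqrt (f z)) differentiable (at x)"
  unfolding differentiable_def using has_derivative_real_sqrt by blast

lemma bounded_linear_transpose: "bounded_linear (transpose :: real^'n^'m \<Rightarrow> real^'m^'n)"
proof -
  have "linear (transpose :: real^'n^'m \<Rightarrow> real^'m^'n)"
    by (simp add: linear_iff transpose_def vec_eq_iff)
  then show ?thesis using linear_conv_bounded_linear by blast
qed

lemma frechet_derivative_symmetric_matrix:
  fixes f :: "'a::real_normed_vector \<Rightarrow> real^'n^'n"
  assumes "open S" "x \<in> S" "\<And>z. z \<in> S \<Longrightarrow> transpose (f z) = f z" "f differentiable (at x)"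
  shows "transpose (frechet_derivative f (at x) v) = frechet_derivative f (at x) v"
proof -
  have "(\<lambda>v. transpose (frechet_derivative f (at x) v)) = frechet_derivative (\<lambda>z. transpose (f z)) (at x)"
    using bounded_linear.has_derivative[OF bounded_linear_transpose assms(4)[unfolded frechet_derivative_works]]
    by (rule frechet_derivative_at)
  also have "\<dots> = frechet_derivative f (at x)"
    by (rule frechet_derivative_cong_open[OF assms(1-3)])
  finally show ?thesis by (rule fun_cong)
qed

lemma bounded_linear_ent: "bounded_linear (\<lambda>M. ent M k l)"
proof -
  have "linear (\<lambda>M. ent M k l)"
    by (simp add: linear_iff ent_def matrix_vector_mult_add_rdistrib inner_add_right
        scaleR_matrix_vector_assoc[symmetric])
  then show ?thesis using linear_conv_bounded_linear by blast
qed

lemma bounded_linear_lift: "bounded_linear (\<lambda>z. lift z 0)"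
proof -
  have "linear (\<lambda>z. lift z 0)" by (simp add: linear_iff lift_def vec_eq_iff forall_3)
  then show ?thesis using linear_conv_bounded_linear by blast
qed

lemma pd2_ent_lift:
  assumes "G differentiable (at (lift x 0))" and "j \<in> {1, 2}"
  shows "pd2 j (\<lambda>z. ent (G (lift z 0)) k l) x = ent (pd3 j G (lift x 0)) k l"
proof -
  have "((\<lambda>z. G (lift z 0)) has_derivative (\<lambda>w. frechet_derivative G (at (lift x 0)) (lift w 0))) (at x)"
    using has_derivative_compose[OF bounded_linear_imp_has_derivative[OF bounded_linear_lift]
        assms(1)[unfolded frechet_derivative_works]] .
  then have "frechet_derivative (\<lambda>z. ent (G (lift z 0)) k l) (at x)
      = (\<lambda>w. ent (frechet_derivative G (at (lift x 0)) (lift w 0)) k l)"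
    by (rule frechet_derivative_at[OF bounded_linear.has_derivative[OF bounded_linear_ent], symmetric])
  then have "pd2 j (\<lambda>z. ent (G (lift z 0)) k l) x = ent (frechet_derivative G (at (lift x 0)) (lift (ax2 j) 0)) k l"
    unfolding pd2_def by simp
  moreover have "lift (ax2 j) 0 = ax3 j" using assms(2) by (auto simp: lift_def ax2_def ax3_def)
  ultimately show ?thesis by (simp add: pd3_def)
qed

lemma ent_nth [simp]:
  assumes "i \<in> {1, 2, 3}" "j \<in> {1, 2, 3}"
  shows "ent M i j = M $ of_nat i $ of_nat j"
  using assms by (auto simp: ent_def ax3_def matrix_vector_mult_def inner_vec_def sum_3)

lemma inner_matrix_vector_mult: "(A *v x) \<bullet> y = x \<bullet> (transpose A *v y)" for A :: "real^'n^'m"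
  using dot_lmul_matrix[of x "transpose A"] by simp

lemma ent_transpose: "ent (transpose M) i j = ent M j i"
  unfolding ent_def inner_matrix_vector_mult[symmetric] by (rule inner_commute)

lemma ent_transpose_mult: "ent (transpose A ** A) i j = (A *v ax3 i) \<bullet> (A *v ax3 j)"
  unfolding ent_def matrix_vector_mul_assoc[symmetric] inner_matrix_vector_mult[symmetric] ..

lemma invertible_matrix_inv:
  assumes "invertible (A::real^'n^'n)"
  shows "A ** matrix_inv A = mat 1" "matrix_inv A ** A = mat 1"
  using someI_ex[OF assms[unfolded invertible_def]] unfolding matrix_inv_def by auto

lemma matrix_inv_mult_eq:
  fixes A :: "real^'n^'n"
  assumes "invertible A" and "A *v u = v"
  shows "matrix_inv A *v v = u"
  using invertible_matrix_inv(2)[OF assms(1)] assms(2) by (metis matrix_vector_mul_assoc matrix_vector_mul_lid)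

lemma matrix_vector_mul_matrix_inv:
  assumes "invertible (A::real^'n^'n)"
  shows "A *v (matrix_inv A *v v) = v"
  using invertible_matrix_inv(1)[OF assms] by (simp add: matrix_vector_mul_assoc)

lemma transpose_mult_solve:
  fixes Q M :: "real^3^3"
  assumes QM: "transpose Q ** Q = M" and M: "det M \<noteq> 0" and u: "transpose Q *v u = c"
  shows "u = Q *v (matrix_inv M *v c)"
proof -
  have "det (transpose Q) \<noteq> 0" using QM M det_mul[of "transpose Q" Q] by auto
  then have inj: "inj ((*v) (transpose Q))" using inj_matrix_vector_mult invertible_det_nz by blast
  have "transpose Q *v (Q *v (matrix_inv M *v c)) = M *v (matrix_inv M *v c)"
    unfolding QM[symmetric] by (metis matrix_vector_mul_assoc)
  also have "\<dots> = transpose Q *v u" using M u invertible_det_nz matrix_vector_mul_matrix_inv by metis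
  finally show ?thesis using inj by (simp add: inj_def)
qed

lemma cols3_nth: "cols3 u v w $ i $ 1 = u $ i" "cols3 u v w $ i $ 2 = v $ i" "cols3 u v w $ i $ 3 = w $ i"
  by (simp_all add: cols3_def transpose_def)

lemma cols3_mult: "cols3 u v w *v g = g$1 *\<^sub>R u + g$2 *\<^sub>R v + g$3 *\<^sub>R w"
  by (simp add: vec_eq_iff cols3_nth matrix_vector_mult_def sum_3 algebra_simps)

lemma transpose_cols3_mult: "transpose (cols3 u v w) *v z = vector [u \<bullet> z, v \<bullet> z, w \<bullet> z]"
  by (simp add: cols3_def vec_eq_iff matrix_vector_mult_def inner_vec_def forall_3 vector_3 mult.commute)

lemma matrix_mul_cols3: "M ** cols3 u v w = cols3 (M *v u) (M *v v) (M *v w)"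
  by (simp add: vec_eq_iff forall_3 cols3_nth matrix_matrix_mult_def matrix_vector_mult_def)

lemma cols3_eq_iff: "cols3 u v w = cols3 u' v' w' \<longleftrightarrow> u = u' \<and> v = v' \<and> w = w'"
  by (auto simp: vec_eq_iff forall_3 cols3_nth)

lemma transpose_cols3_mult_cols3:
  "transpose (cols3 a b c) ** cols3 u v w =
   vector [vector [a \<bullet> u, a \<bullet> v, a \<bullet> w], vector [b \<bullet> u, b \<bullet> v, b \<bullet> w], vector [c \<bullet> u, c \<bullet> v, c \<bullet> w]]"
  by (simp add: vec_eq_iff forall_3 cols3_def transpose_def matrix_matrix_mult_def sum_3 inner_vec_def mult.commute)

lemma matrix_inv_transpose_cols3_mult:
  assumes D: "a \<bullet> cross3 b c \<noteq> 0"
  shows "matrix_inv (transpose (cols3 a b c)) *v q = (1 / (a \<bullet> cross3 b c)) *\<^sub>R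
           (q$1 *\<^sub>R cross3 b c + q$2 *\<^sub>R cross3 c a + q$3 *\<^sub>R cross3 a b)"
proof (rule matrix_inv_mult_eq)
  show "invertible (transpose (cols3 a b c))"
    using D by (simp add: invertible_det_nz cols3_def dot_cross_det)
  have "b \<bullet> cross3 c a = a \<bullet> cross3 b c" "c \<bullet> cross3 a b = a \<bullet> cross3 b c"
    by (simp_all add: cross3_simps)
  then show "transpose (cols3 a b c) *v ((1 / (a \<bullet> cross3 b c)) *\<^sub>R
           (q$1 *\<^sub>R cross3 b c + q$2 *\<^sub>R cross3 c a + q$3 *\<^sub>R cross3 a b)) = q"
    unfolding transpose_cols3_mult using D by (simp add: inner_add_right dot_cross_self vec_eq_iff forall_3)
qed

lemma matrix_inv_2_mult:
  fixes N :: "real^2^2"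
  assumes "det N \<noteq> 0"
  shows "matrix_inv N *v y = vector [(N$2$2 * y$1 - N$1$2 * y$2) / det N, (N$1$1 * y$2 - N$2$1 * y$1) / det N]"
proof -
  define c :: "real^2" where
    "c = vector [(N$2$2 * y$1 - N$1$2 * y$2) / det N, (N$1$1 * y$2 - N$2$1 * y$1) / det N]"
  have "N$i$1 * c$1 + N$i$2 * c$2 = y$i" for i
    using assms exhaust_2[of i] unfolding c_def
    by (auto simp: field_simps) (simp_all add: det_2 algebra_simps)
  then have "N *v c = y" by (simp add: vec_eq_iff matrix_vector_mult_def sum_2)
  then show ?thesis
    unfolding c_def[symmetric] using assms by (simp add: matrix_inv_mult_eq invertible_det_nz)
qed

lemma jac2_mult: "jac2 f x *v g = g$1 *\<^sub>R pd2 1 f x + g$2 *\<^sub>R pd2 2 f x"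
  by (simp add: jac2_def cols2_def vec_eq_iff transpose_def matrix_vector_mult_def sum_2 algebra_simps)

lemma transpose_jac2_mult_jac2:
  "transpose (jac2 f x) ** jac2 g x =
   vector [vector [pd2 1 f x \<bullet> pd2 1 g x, pd2 1 f x \<bullet> pd2 2 g x],
           vector [pd2 2 f x \<bullet> pd2 1 g x, pd2 2 f x \<bullet> pd2 2 g x]]"
  by (simp add: vec_eq_iff forall_2 jac2_def cols2_def transpose_def matrix_matrix_mult_def sum_2
      inner_vec_def mult.commute)

lemma minor22_eq: "minor22 M = vector [vector [M$1$1, M$1$2], vector [M$2$1, M$2$2]]"
  by (simp add: minor22_def)

lemma vector_2x2_eq_iff:
  "(vector [vector [a, b], vector [c, d]] :: real^2^2) = vector [vector [a', b'], vector [c', d']]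
   \<longleftrightarrow> a = a' \<and> b = b' \<and> c = c' \<and> d = d'"
  by (auto simp: vec_eq_iff forall_2)

lemma symm_2x2: "symm (vector [vector [a, b], vector [c, d]]) = vector [vector [a, (b + c) / 2], vector [(b + c) / 2, d]]"
  by (simp add: symm_def vec_eq_iff forall_2 transpose_def)

section \<open>Completing two vectors to a frame with prescribed Gram matrix\<close>

lemma symmetric_matrix_nth:
  fixes M :: "real^3^3"
  assumes "transpose M = M"
  shows "M$2$1 = M$1$2" "M$3$1 = M$1$3" "M$3$2 = M$2$3"
  using arg_cong[OF assms, of "\<lambda>A. A$2$1"] arg_cong[OF assms, of "\<lambda>A. A$3$1"]
    arg_cong[OF assms, of "\<lambda>A. A$3$2"]
  by (simp_all add: transpose_def)

lemma quadratic_form_3: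
  "vector [x, y, z] \<bullet> (M *v vector [x, y, z]) =
   x * (M$1$1 * x + M$1$2 * y + M$1$3 * z) + y * (M$2$1 * x + M$2$2 * y + M$2$3 * z)
   + z * (M$3$1 * x + M$3$2 * y + M$3$3 * z)"
  for M :: "real^3^3"
  by (simp add: inner_vec_def matrix_vector_mult_def sum_3)

lemma posdef_leading_minors:
  fixes M :: "real^3^3"
  assumes sym: "transpose M = M" and pd: "\<forall>v. v \<noteq> 0 \<longrightarrow> v \<bullet> (M *v v) > 0"
  shows "M$1$1 > 0" "M$1$1 * M$2$2 - M$1$2 * M$2$1 > 0" "det M > 0"
proof -
  note s = symmetric_matrix_nth[OF sym]
  have "vector [1, 0, 0] \<bullet> (M *v vector [1, 0, 0]) > 0"
    using pd by (simp add: vec_eq_iff forall_3)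
  then show m: "M$1$1 > 0" by (simp add: quadratic_form_3)
  define d where "d = M$1$1 * M$2$2 - M$1$2 * M$2$1"
  have "vector [M$1$2, - M$1$1, 0] \<bullet> (M *v vector [M$1$2, - M$1$1, 0]) = M$1$1 * d"
    unfolding quadratic_form_3 s d_def by (simp add: algebra_simps)
  moreover have "vector [M$1$2, - M$1$1, 0] \<noteq> (0::real^3)"
    using m by (simp add: vec_eq_iff forall_3)
  ultimately have "M$1$1 * d > 0" using pd by metis
  then show d: "d > 0" unfolding d_def[symmetric] using m by (simp add: zero_less_mult_iff)
  define v :: "real^3" where
    "v = vector [M$1$2 * M$2$3 - M$2$2 * M$1$3, M$1$2 * M$1$3 - M$1$1 * M$2$3, d]"
  have "v \<bullet> (M *v v) = d * det M"
    unfolding v_def d_def quadratic_form_3 det_3 s by (simp add: algebra_simps)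
  moreover have "v \<noteq> 0" using d by (simp add: v_def vec_eq_iff forall_3)
  ultimately have "d * det M > 0" using pd by metis
  then show "det M > 0" using d by (simp add: zero_less_mult_iff)
qed

definition gram_completion :: "real^3 \<Rightarrow> real^3 \<Rightarrow> real^3^3 \<Rightarrow> real^3" where
  "gram_completion a b M =
     ((M$2$2 * M$1$3 - M$1$2 * M$2$3) / (M$1$1 * M$2$2 - M$1$2 * M$2$1)) *\<^sub>R a
     + ((M$1$1 * M$2$3 - M$2$1 * M$1$3) / (M$1$1 * M$2$2 - M$1$2 * M$2$1)) *\<^sub>R b
     + (sqrt (det M / (M$1$1 * M$2$2 - M$1$2 * M$2$1)) / norm (cross3 a b)) *\<^sub>R cross3 a b"

lemma b0_eq_gram_completion:
  assumes "M = G (lift x 0)" and "M$1$1 * M$2$2 - M$1$2 * M$2$1 \<noteq> 0"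
  shows "b0 G y0 x = gram_completion (pd2 1 y0 x) (pd2 2 y0 x) M"
proof -
  have "det (vector [vector [M$1$1, M$1$2], vector [M$2$1, M$2$2]] :: real^2^2) \<noteq> 0"
    using assms(2) by (simp add: det_2)
  then show ?thesis
    unfolding b0_def Let_def assms(1)[symmetric] jac2_mult minor22_eq gram_completion_def
    by (simp add: matrix_inv_2_mult det_2)
qed

lemma gram_completion_inner:
  fixes M :: "real^3^3"
  assumes sym: "transpose M = M" and pd: "\<forall>v. v \<noteq> 0 \<longrightarrow> v \<bullet> (M *v v) > 0"
    and aa: "a \<bullet> a = M$1$1" and ab: "a \<bullet> b = M$1$2" and bb: "b \<bullet> b = M$2$2"
  shows "a \<bullet> gram_completion a b M = M$1$3" "b \<bullet> gram_completion a b M = M$2$3"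
    "gram_completion a b M \<bullet> gram_completion a b M = M$3$3"
proof -
  note s = symmetric_matrix_nth[OF sym]
  define d where "d = M$1$1 * M$2$2 - M$1$2 * M$1$2"
  have d: "d > 0" and detM: "det M > 0" using posdef_leading_minors[OF sym pd] by (simp_all add: d_def s)
  have det_eq: "det M = M$1$1 * M$2$2 * M$3$3 + 2 * M$1$2 * M$2$3 * M$1$3
      - M$1$1 * M$2$3 * M$2$3 - M$2$2 * M$1$3 * M$1$3 - M$3$3 * M$1$2 * M$1$2"
    by (simp add: det_3 s algebra_simps)
  define c where "c = cross3 a b"
  have cc: "c \<bullet> c = d"
    using norm_cross_dot[of a b] aa ab bb
    unfolding c_def d_def power_mult_distrib power2_norm_eq_inner by (simp add: power2_eq_square)
  have ac: "a \<bullet> c = 0" "b \<bullet> c = 0" "c \<bullet> a = 0" "c \<bullet> b = 0"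
    unfolding c_def using dot_cross_self by (auto simp: inner_commute)
  define e1 e2 t where "e1 = (M$2$2 * M$1$3 - M$1$2 * M$2$3) / d"
    and "e2 = (M$1$1 * M$2$3 - M$1$2 * M$1$3) / d" and "t = sqrt (det M / d) / norm c"
  have B: "gram_completion a b M = e1 *\<^sub>R a + e2 *\<^sub>R b + t *\<^sub>R c"
    unfolding gram_completion_def e1_def e2_def t_def c_def d_def s ..
  have ba: "b \<bullet> a = M$1$2" using ab by (simp add: inner_commute)
  have tt: "t * t * (c \<bullet> c) = det M / d"
    using d detM cc unfolding t_def by (simp add: norm_eq_sqrt_inner real_sqrt_divide field_simps)
  show "a \<bullet> gram_completion a b M = M$1$3" "b \<bullet> gram_completion a b M = M$2$3"
    unfolding B using d
    by (simp_all add: inner_add_right ac aa ab ba bb e1_def e2_def field_simps)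
       (simp_all add: d_def algebra_simps)
  have "gram_completion a b M \<bullet> gram_completion a b M
      = e1 * e1 * M$1$1 + 2 * e1 * e2 * M$1$2 + e2 * e2 * M$2$2 + t * t * (c \<bullet> c)"
    unfolding B by (simp add: ac aa ab ba bb algebra_simps)
  also have "\<dots> = M$3$3"
    unfolding tt e1_def e2_def det_eq using d
    by (simp add: field_simps) (simp add: d_def algebra_simps)
  finally show "gram_completion a b M \<bullet> gram_completion a b M = M$3$3" .
qed

lemma cross3_nonzero:
  assumes "(a \<bullet> a) * (b \<bullet> b) - (a \<bullet> b) * (a \<bullet> b) > 0"
  shows "cross3 a b \<noteq> 0"
  using norm_cross_dot[of a b] assms
  unfolding power_mult_distrib power2_norm_eq_inner by (auto simp: power2_eq_square)

lemma differentiable_gram_completion: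
  assumes a: "a differentiable (at x)" and b: "b differentiable (at x)" and M: "M differentiable (at x)"
    and minor: "M x$1$1 * M x$2$2 - M x$1$2 * M x$2$1 > 0" and det: "det (M x) > 0"
    and cross: "cross3 (a x) (b x) \<noteq> 0"
  shows "(\<lambda>z. gram_completion (a z) (b z) (M z)) differentiable (at x)"
proof -
  have minor': "(\<lambda>z. M z$1$1 * M z$2$2 - M z$1$2 * M z$2$1) differentiable (at x)"
    using M by (intro derivative_intros)
  have "(\<lambda>z. det (M z)) differentiable (at x)"
    unfolding det_3 using M by (intro derivative_intros)
  then have sqrt: "(\<lambda>z. sqrt (det (M z) / (M z$1$1 * M z$2$2 - M z$1$2 * M z$2$1))) differentiable (at x)"
    using M minor' minor det by (intro differentiable_real_sqrt derivative_intros) auto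
  have norm: "(\<lambda>z. norm (cross3 (a z) (b z))) differentiable (at x)"
    using differentiable_compose[OF differentiable_norm_at[OF cross] differentiable_cross3[OF a b]]
    by (simp add: o_def)
  show ?thesis
    unfolding gram_completion_def using a b M minor minor' cross sqrt norm
    by (auto intro!: derivative_intros)
qed

section \<open>Koszul's formula\<close>

lemma koszul_formula:
  fixes a :: "nat \<Rightarrow> 'a::real_inner" and D :: "nat \<Rightarrow> nat \<Rightarrow> 'a"
  assumes sym: "\<And>k l. k \<in> I \<Longrightarrow> l \<in> I \<Longrightarrow> D k l = D l k"
    and metric: "\<And>k l m. k \<in> I \<Longrightarrow> l \<in> I \<Longrightarrow> m \<in> I \<Longrightarrow> a m \<bullet> D k l + a l \<bullet> D k m = c k m l"
    and I: "k \<in> I" "l \<in> I" "m \<in> I"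
  shows "a m \<bullet> D k l = (c l m k + c k m l - c m k l) / 2"
  using metric[of k l m] metric[of l k m] metric[of m l k] sym[of l k] sym[of l m] sym[of m k] I
  by simp

definition christoffel1 :: "(real^3 \<Rightarrow> real^3^3) \<Rightarrow> real^3 \<Rightarrow> nat \<Rightarrow> nat \<Rightarrow> nat \<Rightarrow> real" where
  "christoffel1 G p m k l = (ent (pd3 l G p) m k + ent (pd3 k G p) m l - ent (pd3 m G p) k l) / 2"

lemma gvec_eq_christoffel1:
  "gvec G p k l = matrix_inv (G p) *v
     vector [christoffel1 G p 1 k l, christoffel1 G p 2 k l, christoffel1 G p 3 k l]"
  unfolding gvec_def christoffel_def christoffel1_def
  by (simp add: vec_eq_iff forall_3 matrix_vector_mult_def sum_3 add.assoc field_simps)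

lemma lift_in_Omega: "x \<in> \<omega> \<Longrightarrow> lift x 0 \<in> Omega \<omega>"
  unfolding Omega_def by force

lemma open_Omega: assumes "open \<omega>" shows "open (Omega \<omega>)"
proof -
  define P :: "real^3 \<Rightarrow> real^2" where "P p = vector [p$1, p$2]" for p
  have vec2: "vector [x$1, x$2] = x" for x :: "real^2" by (simp add: vec_eq_iff forall_2)
  have eq: "Omega \<omega> = P -` \<omega> \<inter> {p. p$3 < 1/2} \<inter> {p. p$3 > -1/2}"
  proof (intro set_eqI iffI)
    fix p assume "p \<in> Omega \<omega>"
    then obtain x t where "p = lift x t" "x \<in> \<omega>" "-1/2 < t" "t < 1/2" unfolding Omega_def by blast
    then show "p \<in> P -` \<omega> \<inter> {p. p$3 < 1/2} \<inter> {p. p$3 > -1/2}"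
      by (simp add: P_def lift_def vec2)
  next
    fix p assume p: "p \<in> P -` \<omega> \<inter> {p. p$3 < 1/2} \<inter> {p. p$3 > -1/2}"
    have "p = lift (P p) (p$3)" by (simp add: P_def lift_def vec_eq_iff forall_3)
    then show "p \<in> Omega \<omega>" using p unfolding Omega_def by blast
  qed
  moreover have "open (P -` \<omega>)"
  proof (rule continuous_open_vimage[OF assms])
    have "linear P" unfolding linear_iff P_def by (simp add: vec_eq_iff forall_2)
    then show "continuous (at x) P" for x using linear_continuous_at linear_conv_bounded_linear by blast
  qed
  moreover have "open {p::real^3. p$3 < 1/2}" by (rule open_halfspace_component_lt_cart)
  moreover have "open {p::real^3. p$3 > -1/2}" by (rule open_halfspace_component_gt_cart)
  ultimately show ?thesis unfolding eq by (intro open_Int)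
qed

text \<open>Keeps the numerals \<open>1\<close>, \<open>2\<close> used as indices of \<open>pd2\<close> and \<open>frame\<close> from being rewritten to \<open>Suc 0\<close>.\<close>
declare One_nat_def [simp del]

locale metric_immersion =
  fixes \<omega> :: "(real^2) set" and G :: "real^3 \<Rightarrow> real^3^3" and y0 :: "real^2 \<Rightarrow> real^3"
  assumes open_domain: "open \<omega>"
    and G_smooth: "smooth_closure (Omega \<omega>) G"
    and G_spd: "\<forall>x\<in>closure (Omega \<omega>). transpose (G x) = G x \<and> (\<forall>v. v \<noteq> 0 \<longrightarrow> v \<bullet> (G x *v v) > 0)"
    and y0_smooth: "smooth_closure \<omega> y0"
    and isometry: "\<forall>x\<in>\<omega>. transpose (jac2 y0 x) ** jac2 y0 x = minor22 (G (lift x 0))"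
    and second_form: "\<forall>x\<in>\<omega>. symm (transpose (jac2 y0 x) ** jac2 (b0 G y0) x)
                        = (1/2) *\<^sub>R minor22 (pd3 3 G (lift x 0))"
begin

lemma G_symmetric: "p \<in> Omega \<omega> \<Longrightarrow> transpose (G p) = G p"
  using G_spd closure_subset by blast

lemma G_posdef: "x \<in> \<omega> \<Longrightarrow> \<forall>v. v \<noteq> 0 \<longrightarrow> v \<bullet> (G (lift x 0) *v v) > 0"
  using G_spd closure_subset lift_in_Omega by blast

lemma G_differentiable: "p \<in> Omega \<omega> \<Longrightarrow> G differentiable (at p)"
  using G_smooth closure_subset smooth_on_differentiable unfolding smooth_closure_def by blast

lemma G_minors_pos:
  assumes "x \<in> \<omega>"
  shows "G (lift x 0)$1$1 * G (lift x 0)$2$2 - G (lift x 0)$1$2 * G (lift x 0)$2$1 > 0"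
    and "det (G (lift x 0)) > 0"
  using posdef_leading_minors[OF G_symmetric[OF lift_in_Omega] G_posdef] assms by auto

lemma pd3_G_symmetric:
  assumes "x \<in> \<omega>"
  shows "ent (pd3 k G (lift x 0)) i j = ent (pd3 k G (lift x 0)) j i"
proof -
  have "transpose (pd3 k G (lift x 0)) = pd3 k G (lift x 0)"
    unfolding pd3_def
    by (rule frechet_derivative_symmetric_matrix[OF open_Omega[OF open_domain] lift_in_Omega[OF assms]
          G_symmetric G_differentiable[OF lift_in_Omega[OF assms]]])
  with ent_transpose[of "pd3 k G (lift x 0)" i j] show ?thesis by simp
qed

lemma y0_differentiable:
  assumes "z \<in> \<omega>"
  shows "y0 differentiable (at z)" and "pd2 k y0 differentiable (at z)"
  using y0_smooth assms closure_subset smooth_on_differentiable smooth_on_pd2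
  unfolding smooth_closure_def by blast+

lemma pd2_pd2_y0_commute:
  assumes x: "x \<in> \<omega>"
  shows "pd2 i (pd2 j y0) x = pd2 j (pd2 i y0) x"
proof -
  obtain r where r: "r > 0" "ball x r \<subseteq> \<omega>" using open_domain x open_contains_ball by blast
  have "frechet_derivative (\<lambda>z. frechet_derivative y0 (at z) (ax2 j)) (at x) (ax2 i)
      = frechet_derivative (\<lambda>z. frechet_derivative y0 (at z) (ax2 i)) (at x) (ax2 j)"
    using r x y0_differentiable unfolding pd2_def[abs_def]
    by (intro frechet_derivative_second_commute[OF r(1)]) auto
  then show ?thesis by (simp add: pd2_def[abs_def])
qed

lemma isometry_inner:
  assumes "z \<in> \<omega>"
  shows "pd2 1 y0 z \<bullet> pd2 1 y0 z = G (lift z 0)$1$1" "pd2 1 y0 z \<bullet> pd2 2 y0 z = G (lift z 0)$1$2"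
    "pd2 2 y0 z \<bullet> pd2 1 y0 z = G (lift z 0)$2$1" "pd2 2 y0 z \<bullet> pd2 2 y0 z = G (lift z 0)$2$2"
  using isometry assms unfolding transpose_jac2_mult_jac2 minor22_eq vector_2x2_eq_iff by auto

lemma b0_eq: "z \<in> \<omega> \<Longrightarrow> b0 G y0 z = gram_completion (pd2 1 y0 z) (pd2 2 y0 z) (G (lift z 0))"
  using b0_eq_gram_completion G_minors_pos(1) by (metis less_irrefl)

lemma b0_inner:
  assumes z: "z \<in> \<omega>"
  shows "pd2 1 y0 z \<bullet> b0 G y0 z = G (lift z 0)$1$3" "pd2 2 y0 z \<bullet> b0 G y0 z = G (lift z 0)$2$3"
    "b0 G y0 z \<bullet> b0 G y0 z = G (lift z 0)$3$3"
  using gram_completion_inner[OF G_symmetric[OF lift_in_Omega[OF z]] G_posdef[OF z] isometry_inner(1,2,4)[OF z]]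
  by (simp_all add: b0_eq[OF z])

lemma cross3_pd2_y0_nonzero: "z \<in> \<omega> \<Longrightarrow> cross3 (pd2 1 y0 z) (pd2 2 y0 z) \<noteq> 0"
  using cross3_nonzero G_minors_pos(1) isometry_inner by (metis inner_commute)

lemma b0_differentiable:
  assumes x: "x \<in> \<omega>"
  shows "b0 G y0 differentiable (at x)"
proof (rule differentiable_cong_open[OF open_domain x b0_eq])
  have "(\<lambda>z. G (lift z 0)) differentiable (at x)"
    by (rule differentiable_compose[where f = G and g = "\<lambda>z. lift z 0"])
       (simp_all add: G_differentiable[OF lift_in_Omega[OF x]] bounded_linear_imp_differentiable[OF bounded_linear_lift])
  then show "(\<lambda>z. gram_completion (pd2 1 y0 z) (pd2 2 y0 z) (G (lift z 0))) differentiable (at x)"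
    using y0_differentiable(2)[OF x] G_minors_pos[OF x] cross3_pd2_y0_nonzero[OF x]
    by (intro differentiable_gram_completion)
qed

lemma Q0_gram:
  assumes z: "z \<in> \<omega>"
  shows "transpose (Q0 G y0 z) ** Q0 G y0 z = G (lift z 0)"
  using isometry_inner[OF z] b0_inner[OF z] symmetric_matrix_nth[OF G_symmetric[OF lift_in_Omega[OF z]]]
  unfolding Q0_def transpose_cols3_mult_cols3 by (simp add: vec_eq_iff forall_3 inner_commute)

lemma det_G_nonzero: "x \<in> \<omega> \<Longrightarrow> det (G (lift x 0)) \<noteq> 0"
  using G_minors_pos(2) by (metis less_irrefl)

lemma transpose_Q0_invertible: "z \<in> \<omega> \<Longrightarrow> invertible (transpose (Q0 G y0 z))"
  using Q0_gram det_G_nonzero det_mul[of "transpose (Q0 G y0 z)" "Q0 G y0 z"] invertible_det_nz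
  by (metis mult_zero_left)

definition frame :: "nat \<Rightarrow> real^2 \<Rightarrow> real^3" where
  "frame l z = Q0 G y0 z *v ax3 l"

lemma frame_simps: "frame 1 = pd2 1 y0" "frame 2 = pd2 2 y0" "frame 3 = b0 G y0"
  by (simp_all add: fun_eq_iff frame_def Q0_def cols3_mult ax3_def)

lemma transpose_Q0_mult: "transpose (Q0 G y0 z) *v u = vector [frame 1 z \<bullet> u, frame 2 z \<bullet> u, frame 3 z \<bullet> u]"
  unfolding Q0_def frame_simps transpose_cols3_mult ..

lemma frame_gram: "z \<in> \<omega> \<Longrightarrow> frame m z \<bullet> frame l z = ent (G (lift z 0)) m l"
  unfolding frame_def ent_transpose_mult[symmetric] Q0_gram by simp

lemma frame_differentiable: "z \<in> \<omega> \<Longrightarrow> l \<in> {1, 2, 3} \<Longrightarrow> frame l differentiable (at z)"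
  using y0_differentiable b0_differentiable by (auto simp: frame_simps)

definition frame_deriv :: "nat \<Rightarrow> nat \<Rightarrow> real^2 \<Rightarrow> real^3" where
  "frame_deriv k l x =
     (if k = 3 then if l = 3 then d0 G y0 x else pd2 l (frame 3) x else pd2 k (frame l) x)"

lemma frame_deriv_commute:
  assumes "x \<in> \<omega>" "k \<in> {1, 2, 3}" "l \<in> {1, 2, 3}"
  shows "frame_deriv k l x = frame_deriv l k x"
  using assms pd2_pd2_y0_commute by (auto simp: frame_deriv_def frame_simps)

lemma frame_deriv_metric_tangential:
  assumes x: "x \<in> \<omega>" and k: "k \<in> {1, 2}" and lm: "l \<in> {1, 2, 3}" "m \<in> {1, 2, 3}"
  shows "frame m x \<bullet> frame_deriv k l x + frame l x \<bullet> frame_deriv k m x = ent (pd3 k G (lift x 0)) m l"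
proof -
  have "pd2 k (\<lambda>z. frame m z \<bullet> frame l z) x = pd2 k (\<lambda>z. ent (G (lift z 0)) m l) x"
    by (rule pd2_cong_open[OF open_domain x]) (simp add: frame_gram)
  then have "pd2 k (frame m) x \<bullet> frame l x + frame m x \<bullet> pd2 k (frame l) x = ent (pd3 k G (lift x 0)) m l"
    using lm pd2_inner[OF frame_differentiable[OF x] frame_differentiable[OF x]]
      pd2_ent_lift[OF G_differentiable[OF lift_in_Omega[OF x]] k] by simp
  then show ?thesis
    using k by (auto simp: frame_deriv_def inner_commute)
qed

lemma second_form_inner:
  assumes x: "x \<in> \<omega>" and lm: "l \<in> {1, 2}" "m \<in> {1, 2}"
  shows "frame m x \<bullet> pd2 l (frame 3) x + frame l x \<bullet> pd2 m (frame 3) x = ent (pd3 3 G (lift x 0)) m l"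
  using second_form x lm
  unfolding transpose_jac2_mult_jac2 symm_2x2 minor22_eq
  by (auto simp: vec_eq_iff forall_2 frame_simps)

lemma transpose_Q0_mult_d0:
  assumes "x \<in> \<omega>"
  shows "transpose (Q0 G y0 x) *v d0 G y0 x = pd3 3 G (lift x 0) *v ax3 3
      - (1/2 * ent (pd3 3 G (lift x 0)) 3 3) *\<^sub>R ax3 3
      - vector [pd2 1 (frame 3) x \<bullet> frame 3 x, pd2 2 (frame 3) x \<bullet> frame 3 x, 0]"
  unfolding d0_def Let_def frame_simps
  by (rule matrix_vector_mul_matrix_inv[OF transpose_Q0_invertible[OF assms]])

lemma d0_inner:
  assumes x: "x \<in> \<omega>"
  shows "l \<in> {1, 2} \<Longrightarrow> frame l x \<bullet> d0 G y0 x = ent (pd3 3 G (lift x 0)) l 3 - pd2 l (frame 3) x \<bullet> frame 3 x"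
    and "frame 3 x \<bullet> d0 G y0 x = ent (pd3 3 G (lift x 0)) 3 3 / 2"
  using transpose_Q0_mult_d0[OF x] unfolding transpose_Q0_mult
  by (auto simp: vec_eq_iff forall_3 ax3_def matrix_vector_mult_def sum_3)

lemma frame_deriv_metric:
  assumes x: "x \<in> \<omega>" and klm: "k \<in> {1, 2, 3}" "l \<in> {1, 2, 3}" "m \<in> {1, 2, 3}"
  shows "frame m x \<bullet> frame_deriv k l x + frame l x \<bullet> frame_deriv k m x = ent (pd3 k G (lift x 0)) m l"
proof (cases "k = 3")
  case False
  then show ?thesis using frame_deriv_metric_tangential[OF x _ klm(2,3)] klm(1) by auto
next
  case True
  have "ent (pd3 3 G (lift x 0)) 3 l = ent (pd3 3 G (lift x 0)) l 3"
    by (rule pd3_G_symmetric[OF x])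
  then show ?thesis
    using True klm second_form_inner[OF x] d0_inner[OF x]
    by (auto simp: frame_deriv_def inner_commute)
qed

lemma frame_deriv_christoffel:
  assumes x: "x \<in> \<omega>" and kl: "k \<in> {1, 2, 3}" "l \<in> {1, 2, 3}"
  shows "frame_deriv k l x = Q0 G y0 x *v gvec G (lift x 0) k l"
proof -
  have "frame m x \<bullet> frame_deriv k l x = christoffel1 G (lift x 0) m k l" if "m \<in> {1, 2, 3}" for m
    using koszul_formula[where a = "\<lambda>m. frame m x" and D = "\<lambda>k l. frame_deriv k l x",
        OF frame_deriv_commute[OF x] frame_deriv_metric[OF x] kl that]
    by (simp add: christoffel1_def)
  then have "transpose (Q0 G y0 x) *v frame_deriv k l x
      = vector [christoffel1 G (lift x 0) 1 k l, christoffel1 G (lift x 0) 2 k l, christoffel1 G (lift x 0) 3 k l]"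
    unfolding transpose_Q0_mult by simp
  then show ?thesis
    unfolding gvec_eq_christoffel1 by (rule transpose_mult_solve[OF Q0_gram[OF x] det_G_nonzero[OF x]])
qed

lemma christoffel_columns:
  assumes x: "x \<in> \<omega>" and ij: "i \<in> {1, 2}" "j \<in> {1, 2}"
  shows "pd2 i (pd2 j y0) x = Q0 G y0 x *v gvec G (lift x 0) i j"
    and "pd2 i (b0 G y0) x = Q0 G y0 x *v gvec G (lift x 0) i 3"
    and "d0 G y0 x = Q0 G y0 x *v gvec G (lift x 0) 3 3"
  using frame_deriv_christoffel[OF x, of i j] frame_deriv_christoffel[OF x, of i 3]
    frame_deriv_christoffel[OF x, of 3 3] ij
  by (auto simp: frame_deriv_def frame_simps)

lemma matrix_inv_transpose_Q0_differentiable: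
  assumes x: "x \<in> \<omega>" and q: "q differentiable (at x)"
  shows "(\<lambda>z. matrix_inv (transpose (Q0 G y0 z)) *v q z) differentiable (at x)"
proof -
  let ?D = "\<lambda>z. frame 1 z \<bullet> cross3 (frame 2 z) (frame 3 z)"
  have D: "?D z \<noteq> 0" if "z \<in> \<omega>" for z
  proof -
    have "det (transpose (Q0 G y0 z)) \<noteq> 0"
      using transpose_Q0_invertible[OF that] invertible_det_nz by blast
    then show ?thesis by (simp add: Q0_def frame_simps cols3_def dot_cross_det)
  qed
  show ?thesis
  proof (rule differentiable_cong_open[OF open_domain x])
    show "matrix_inv (transpose (Q0 G y0 z)) *v q z = (1 / ?D z) *\<^sub>R
        (q z$1 *\<^sub>R cross3 (frame 2 z) (frame 3 z) + q z$2 *\<^sub>R cross3 (frame 3 z) (frame 1 z)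
         + q z$3 *\<^sub>R cross3 (frame 1 z) (frame 2 z))" if "z \<in> \<omega>" for z
      using matrix_inv_transpose_cols3_mult[OF D[OF that]] by (simp add: Q0_def frame_simps)
    show "(\<lambda>z. (1 / ?D z) *\<^sub>R
        (q z$1 *\<^sub>R cross3 (frame 2 z) (frame 3 z) + q z$2 *\<^sub>R cross3 (frame 3 z) (frame 1 z)
         + q z$3 *\<^sub>R cross3 (frame 1 z) (frame 2 z))) differentiable (at x)"
      using frame_differentiable[OF x] q D[OF x] by (auto intro!: derivative_intros differentiable_inner)
  qed
qed

lemma pd2_matrix_inv_transpose_Q0:
  assumes x: "x \<in> \<omega>" and q: "q differentiable (at x)" and ij: "i \<in> {1, 2}" "j \<in> {1, 2}"
  shows "pd2 i y0 x \<bullet> pd2 j (\<lambda>z. matrix_inv (transpose (Q0 G y0 z)) *v q z) x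
       = ax3 i \<bullet> pd2 j q x - q x \<bullet> gvec G (lift x 0) i j"
proof -
  define w where "w z = matrix_inv (transpose (Q0 G y0 z)) *v q z" for z
  have w: "w differentiable (at x)"
    unfolding w_def[abs_def] by (rule matrix_inv_transpose_Q0_differentiable[OF x q])
  have Qw: "transpose (Q0 G y0 z) *v w z = q z" if "z \<in> \<omega>" for z
    unfolding w_def by (rule matrix_vector_mul_matrix_inv[OF transpose_Q0_invertible[OF that]])
  then have "pd2 i y0 z \<bullet> w z = ax3 i \<bullet> q z" if "z \<in> \<omega>" for z
    using ij that unfolding transpose_Q0_mult
    by (auto simp: vec_eq_iff forall_3 ax3_def inner_vec_def sum_3 frame_simps)
  then have "pd2 j (\<lambda>z. pd2 i y0 z \<bullet> w z) x = pd2 j (\<lambda>z. ax3 i \<bullet> q z) x"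
    by (intro pd2_cong_open[OF open_domain x])
  then have "pd2 j (pd2 i y0) x \<bullet> w x + pd2 i y0 x \<bullet> pd2 j w x = ax3 i \<bullet> pd2 j q x"
    by (simp add: pd2_inner[OF y0_differentiable(2)[OF x] w] pd2_inner_const[OF q])
  moreover have "pd2 j (pd2 i y0) x \<bullet> w x = gvec G (lift x 0) i j \<bullet> q x"
    by (simp only: pd2_pd2_y0_commute[OF x, of j i] christoffel_columns(1)[OF x ij]
        inner_matrix_vector_mult Qw[OF x])
  ultimately show ?thesis by (simp add: w_def[abs_def] inner_commute)
qed

end

theorem lemma7p1:
  fixes \<omega> :: "(real^2) set"
    and G :: "real^3 \<Rightarrow> real^3^3"
    and y0 :: "real^2 \<Rightarrow> real^3"
  assumes "open \<omega>" and "bounded \<omega>" and "connected \<omega>" and "lipschitz_domain \<omega>"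
    and "smooth_closure (Omega \<omega>) G"
    and "\<forall>x\<in>closure (Omega \<omega>). transpose (G x) = G x \<and> (\<forall>v. v \<noteq> 0 \<longrightarrow> v \<bullet> (G x *v v) > 0)"
    and "smooth_closure \<omega> y0"
    and "\<forall>x\<in>\<omega>. transpose (jac2 y0 x) ** jac2 y0 x = minor22 (G (lift x 0))"
    and "\<forall>x\<in>\<omega>. symm (transpose (jac2 y0 x) ** jac2 (b0 G y0) x)
                 = (1/2) *\<^sub>R minor22 (pd3 3 G (lift x 0))"
  shows "(\<forall>i\<in>{1,2}. \<forall>j\<in>{1,2}. \<forall>x\<in>\<omega>.
            cols3 (pd2 i (pd2 j y0) x) (pd2 i (b0 G y0) x) (d0 G y0 x)
            = Q0 G y0 x ** cols3 (gvec G (lift x 0) i j) (gvec G (lift x 0) i 3) (gvec G (lift x 0) 3 3))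
       \<and> (\<forall>q :: real^2 \<Rightarrow> real^3. smooth_on \<omega> q \<longrightarrow>
            (\<forall>i\<in>{1,2}. \<forall>j\<in>{1,2}. \<forall>x\<in>\<omega>.
               pd2 i y0 x \<bullet> pd2 j (\<lambda>z. matrix_inv (transpose (Q0 G y0 z)) *v q z) x
               = ax3 i \<bullet> pd2 j q x - q x \<bullet> gvec G (lift x 0) i j))"
proof -
  interpret metric_immersion \<omega> G y0
    using assms by unfold_locales auto
  show ?thesis
  proof (intro conjI ballI allI impI)
    fix i j :: nat and x assume "i \<in> {1, 2}" "j \<in> {1, 2}" "x \<in> \<omega>"
    then show "cols3 (pd2 i (pd2 j y0) x) (pd2 i (b0 G y0) x) (d0 G y0 x)
        = Q0 G y0 x ** cols3 (gvec G (lift x 0) i j) (gvec G (lift x 0) i 3) (gvec G (lift x 0) 3 3)"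
      by (simp add: matrix_mul_cols3 cols3_eq_iff christoffel_columns)
  next
    fix q :: "real^2 \<Rightarrow> real^3" and i j :: nat and x
    assume "smooth_on \<omega> q" "i \<in> {1, 2}" "j \<in> {1, 2}" "x \<in> \<omega>"
    then show "pd2 i y0 x \<bullet> pd2 j (\<lambda>z. matrix_inv (transpose (Q0 G y0 z)) *v q z) x
        = ax3 i \<bullet> pd2 j q x - q x \<bullet> gvec G (lift x 0) i j"
      using pd2_matrix_inv_transpose_Q0 smooth_on_differentiable[OF _ assms(1)] by blast
  qed
qed

end
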